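(* Let $t\ge2$, $a\in\{0,1\}$, let $\pi$ be a partition with $t$-core $\kappa$, let $(n_0,\dots,n_{t-1})$ be the $n$-vector of $\kappa$, and let $(\hat\pi_0,\dots,\hat\pi_{t-1})$ be the $t$-quotient of $\pi$. If $t\equiv 2a\pmod 4$, then \[ \mathrm{srank}(\pi)\equiv\mathrm{srank}(\kappa)+2a\sum_{i=0}^{t-1}|\hat\pi_i|\pmod4. \] If $t\equiv 1+2a\pmod4$, then \[ \mathrm{srank}(\pi)\equiv\mathrm{srank}(\kappa)+2\sum_{i=0}^{t-1}(n_i+i+a)|\hat\pi_i|+\sum_{i=0}^{t-1}\mathrm{srank}(\hat\pi_i)\pmod4. \]
   Context: For a partition $\pi$, $|\pi|$ is the sum of parts, $\pi'$ its conjugate, $\mathcal O(\pi)$ the number of odd parts, and $\mathrm{srank}(\pi)=\mathcal O(\pi)-\mathcal O(\pi')$. A $t$-core is a partition with no rim hook of length $t$; the $t$-core of $\pi$ is obtained by successively removing rim hooks of length $t$ as long as possible. The cell in row $a'$, column $b'$ of a Young diagram is labelled by $b'-a' \bmod t$. For a $t$-core $\kappa$ with $r_i$ cells labelled $i$, the $n$-vector is $(r_0-r_1,r_1-r_2,\dots,r_{t-1}-r_0)$. $t$-quotient: for $\pi=(\lambda_1\ge\lambda_2\ge\cdots)$ with $\lambda_j=0$ for large $j$, let $S=\{\lambda_j-j:j\ge1\}$ and for $0\le c\le t-1$ let $S_c=\{k\in\mathbb Z: tk+c\in S\}$. Then $\hat\pi_c$ is the partition whose parts are the numbers $\#\{s\in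 S_c:s>g\}$ as $g$ ranges over integers not in $S_c$ (only finitely many are positive). The $t$-quotient is $(\hat\pi_0,\dots,\hat\pi_{t-1})$, and $|\pi|=|\kappa|+t\sum_i|\hat\pi_i|$. *)

theory Defs
  imports Main
begin

definition is_partition :: "nat list \<Rightarrow> bool" where
  "is_partition xs \<longleftrightarrow> sorted_wrt (\<ge>) xs \<and> 0 \<notin> set xs"

definition psize :: "nat list \<Rightarrow> nat" where
  "psize xs = sum_list xs"

definition conjugate :: "nat list \<Rightarrow> nat list" where
  "conjugate xs = map (\<lambda>j. length (filter (\<lambda>x. x > j) xs)) [0..<(if xs = [] then 0 else Max (set xs))]"

definition odd_parts :: "nat list \<Rightarrow> nat" where
  "odd_parts xs = length (filter odd xs)"

definition srank :: "nat list \<Rightarrow> int" where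
  "srank xs = int (odd_parts xs) - int (odd_parts (conjugate xs))"

definition diagram :: "nat list \<Rightarrow> (nat \<times> nat) set" where
  "diagram xs = {(i, j). i < length xs \<and> j < xs ! i}"

definition cell_adj :: "(nat \<times> nat) set \<Rightarrow> ((nat \<times> nat) \<times> (nat \<times> nat)) set" where
  "cell_adj H = {(p, q). p \<in> H \<and> q \<in> H \<and>
     ((fst p = fst q \<and> (snd q = snd p + 1 \<or> snd p = snd q + 1)) \<or>
      (snd p = snd q \<and> (fst q = fst p + 1 \<or> fst p = fst q + 1)))}"

definition cells_connected :: "(nat \<times> nat) set \<Rightarrow> bool" where
  "cells_connected H \<longleftrightarrow> (\<forall>p\<in>H. \<forall>q\<in>H. (p, q) \<in> (cell_adj H)\<^sup>*)"

definition no_2x2 :: "(nat \<times> nat) set \<Rightarrow> bool" where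
  "no_2x2 H \<longleftrightarrow> \<not> (\<exists>i j. (i, j) \<in> H \<and> (i + 1, j) \<in> H \<and> (i, j + 1) \<in> H \<and> (i + 1, j + 1) \<in> H)"

definition rim_hook_removal :: "nat \<Rightarrow> nat list \<Rightarrow> nat list \<Rightarrow> bool" where
  "rim_hook_removal t lam mu \<longleftrightarrow> is_partition lam \<and> is_partition mu \<and>
     diagram mu \<subseteq> diagram lam \<and> card (diagram lam - diagram mu) = t \<and>
     cells_connected (diagram lam - diagram mu) \<and> no_2x2 (diagram lam - diagram mu)"

definition is_tcore :: "nat \<Rightarrow> nat list \<Rightarrow> bool" where
  "is_tcore t k \<longleftrightarrow> is_partition k \<and> \<not> (\<exists>mu. rim_hook_removal t k mu)"

definition tcore_of :: "nat \<Rightarrow> nat list \<Rightarrow> nat list \<Rightarrow> bool" where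
  "tcore_of t pi k \<longleftrightarrow> (rim_hook_removal t)\<^sup>*\<^sup>* pi k \<and> is_tcore t k"

definition label_count :: "nat \<Rightarrow> nat list \<Rightarrow> nat \<Rightarrow> int" where
  "label_count t k i = int (card {(r, c) \<in> diagram k. (int c - int r) mod int t = int i})"

definition nvec :: "nat \<Rightarrow> nat list \<Rightarrow> nat \<Rightarrow> int" where
  "nvec t k i = label_count t k i - label_count t k ((i + 1) mod t)"

definition part1 :: "nat list \<Rightarrow> nat \<Rightarrow> nat" where
  "part1 xs j = (if 1 \<le> j \<and> j \<le> length xs then xs ! (j - 1) else 0)"

definition beta_set :: "nat list \<Rightarrow> int set" where
  "beta_set xs = {int (part1 xs j) - int j | j. j \<ge> 1}"

definition beta_runner :: "nat \<Rightarrow> nat list \<Rightarrow> nat \<Rightarrow> int set" where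
  "beta_runner t xs c = {k. int t * k + int c \<in> beta_set xs}"

definition count_above :: "int set \<Rightarrow> int \<Rightarrow> nat" where
  "count_above S g = card {s \<in> S. s > g}"

definition quotient_comp :: "nat \<Rightarrow> nat list \<Rightarrow> nat \<Rightarrow> nat list" where
  "quotient_comp t xs c =
     (let S = beta_runner t xs c;
          G = {g. g \<notin> S \<and> count_above S g > 0}
      in rev (sort (map (count_above S) (sorted_list_of_set G))))"

end

(*
  Modulo 4, srank \<lambda> is twice the number of cells (i, j) of \<lambda> with i + j odd, since adding one
  cell changes the numbers of odd parts of \<lambda> and of its conjugate by one each.  Removing a rim
  t-hook moves one element b of the beta-set to the free position b - t, and the contents of the
  removed cells are exactly b - t + 1, ..., b; so modulo 4 srank changes by t, or for odd t by
  t + 1 or t - 1 according to the parity of b.  On the t-abacus the same move pushes a single bead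
  one step down on the runner c = b mod t, which removes one cell from the quotient component c;
  its srank then changes by 2 or 0 according to the parity of the bead's position on the runner
  plus the charge of the runner, and the charges of the runners are invariant and equal the
  n-vector of the core.  Adding up along the removals down to the core, whose quotient is empty, gives both
  congruences.
*)

theory Submission
  imports Defs "HOL-Library.Multiset" "HOL-Number_Theory.Cong"
begin

section \<open>srank modulo 4\<close>

lemma length_filter_mset_eq: "mset xs = mset ys \<Longrightarrow> length (filter P xs) = length (filter P ys)"
  by (metis mset_filter size_mset)

lemma conjugate_mset_eq:
  assumes "mset xs = mset ys" shows "conjugate xs = conjugate ys"
proof -
  have "set xs = set ys" using assms by (rule mset_eq_setD)
  moreover have "xs = [] \<longleftrightarrow> ys = []" using \<open>set xs = set ys\<close> by auto
  ultimately show ?thesis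
    unfolding conjugate_def length_filter_mset_eq[OF assms] by simp
qed

lemma srank_mset_eq:
  assumes "mset xs = mset ys" shows "srank xs = srank ys"
  unfolding srank_def odd_parts_def conjugate_mset_eq[OF assms] length_filter_mset_eq[OF assms] ..

lemma srank_Cons_0: "srank (0 # xs) = srank xs"
proof -
  have "conjugate (0 # xs) = conjugate xs"
    by (cases "xs = []") (simp_all add: conjugate_def max_def)
  then show ?thesis by (simp add: srank_def odd_parts_def)
qed

lemma srank_Nil: "srank [] = 0"
  by (simp add: srank_def odd_parts_def conjugate_def)

lemma odd_parts_conjugate:
  assumes "\<forall>x\<in>set xs. x \<le> N"
  shows "odd_parts (conjugate xs) = card {j. j < N \<and> odd (length (filter (\<lambda>x. j < x) xs))}"
proof -
  define M where "M = (if xs = [] then 0 else Max (set xs))"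
  have "M \<le> N" using assms by (auto simp: M_def)
  moreover have zero: "length (filter (\<lambda>x. j < x) xs) = 0" if "M \<le> j" for j
    using that by (auto simp: M_def filter_empty_conv split: if_splits)
  ultimately have "j < M \<longleftrightarrow> j < N" if "odd (length (filter (\<lambda>x. j < x) xs))" for j
    using that zero[of j] by (cases "M \<le> j") auto
  then have range: "{j. j < M \<and> odd (length (filter (\<lambda>x. j < x) xs))}
      = {j. j < N \<and> odd (length (filter (\<lambda>x. j < x) xs))}"
    by blast
  have "odd_parts (conjugate xs)
      = length (filter odd (map (\<lambda>j. length (filter (\<lambda>x. j < x) xs)) [0..<M]))"
    by (simp add: odd_parts_def conjugate_def M_def)
  also have "\<dots> = card {j. j < M \<and> odd (length (filter (\<lambda>x. j < x) xs))}"
    unfolding length_filter_conv_card by (rule arg_cong[where f = card]) auto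
  finally show ?thesis unfolding range .
qed

text \<open>Growing a part from m to m + 1 turns the column m of the diagram from length p to
  p + 1, where p counts the other parts exceeding m; both odd-part counts change by one, with
  signs given by the parities of m and p.\<close>
lemma srank_Cons_Suc_cong:
  "[srank (Suc m # ys)
     = srank (m # ys) + (if even (Suc m + length (filter (\<lambda>y. m < y) ys)) then 2 else 0)] (mod 4)"
proof -
  define N where "N = Suc m + sum_list ys"
  have bound: "\<forall>x\<in>set (k # ys). x \<le> N" if "k \<le> Suc m" for k
    using that by (auto simp: N_def dest!: member_le_sum_list)
  define p where "p = length (filter (\<lambda>y. m < y) ys)"
  define c where "c j = length (filter (\<lambda>x. j < x) ys)" for j
  have conj: "odd_parts (conjugate (k # ys))
      = card {j. j < N \<and> j \<noteq> m \<and> odd (c j + (if j < k then 1 else 0))}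
        + (if odd ((if m < k then 1 else 0) + p) then 1 else 0)"
    if "k \<le> Suc m" for k
  proof -
    have "{j. j < N \<and> odd (length (filter (\<lambda>x. j < x) (k # ys)))}
        = {j. j < N \<and> j \<noteq> m \<and> odd (c j + (if j < k then 1 else 0))}
          \<union> (if odd ((if m < k then 1 else 0) + p) then {m} else {})"
      by (auto simp: c_def p_def N_def)
    then show ?thesis
      unfolding odd_parts_conjugate[OF bound[OF that]] by (auto simp: card_insert_if)
  qed
  have same: "{j. j < N \<and> j \<noteq> m \<and> odd (c j + (if j < Suc m then 1 else 0))}
      = {j. j < N \<and> j \<noteq> m \<and> odd (c j + (if j < m then 1 else 0))}"
    by auto
  show ?thesis
    unfolding srank_def conj[OF order.refl] conj[OF le_SucI[OF order.refl]] same p_def[symmetric]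
    by (cases "even m"; cases "even p") (simp_all add: odd_parts_def cong_iff_dvd_diff)
qed

lemma sorted_partition_induct [consumes 1, case_names Nil snoc_0 snoc_Suc]:
  assumes "sorted_wrt (\<ge>) xs"
    and Nil: "P []"
    and snoc_0: "\<And>ys. P ys \<Longrightarrow> P (ys @ [0])"
    and snoc_Suc: "\<And>ys m. sorted_wrt (\<ge>) (ys @ [Suc m]) \<Longrightarrow> P (ys @ [m]) \<Longrightarrow> P (ys @ [Suc m])"
  shows "P xs"
  using assms(1)
proof (induction "sum_list xs + length xs" arbitrary: xs rule: less_induct)
  case less
  show ?case
  proof (cases xs rule: rev_exhaust)
    case Nil
    then show ?thesis by (simp add: assms(2))
  next
    case (snoc ys m)
    have "sorted_wrt (\<ge>) ys" and ge: "\<forall>y\<in>set ys. m \<le> y"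
      using less.prems by (simp_all add: snoc sorted_wrt_append)
    show ?thesis
    proof (cases m)
      case 0
      then show ?thesis using less.hyps[of ys] \<open>sorted_wrt (\<ge>) ys\<close> snoc_0 by (simp add: snoc)
    next
      case (Suc m')
      have "sorted_wrt (\<ge>) (ys @ [m'])"
        using \<open>sorted_wrt (\<ge>) ys\<close> ge by (auto simp: Suc sorted_wrt_append)
      then show ?thesis
        using less.hyps[of "ys @ [m']"] snoc_Suc[of ys m'] less.prems by (simp add: snoc Suc)
    qed
  qed
qed

lemma diagram_snoc: "diagram (ys @ [m]) = diagram ys \<union> {(length ys, j) | j. j < m}"
  unfolding diagram_def by (auto simp: nth_append less_Suc_eq)

lemma diagram_snoc_0: "diagram (ys @ [0]) = diagram ys"
  by (simp add: diagram_snoc)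

lemma diagram_snoc_Suc: "diagram (ys @ [Suc m]) = insert (length ys, m) (diagram (ys @ [m]))"
  unfolding diagram_snoc by (auto simp: less_Suc_eq)

lemma finite_diagram: "finite (diagram xs)"
proof (rule finite_subset)
  show "diagram xs \<subseteq> {..<length xs} \<times> {..<sum_list xs}"
    unfolding diagram_def by (auto simp: elem_le_sum_list less_le_trans)
qed simp

lemma card_diagram_snoc_Suc:
  "card {c \<in> diagram (ys @ [Suc m]). P c}
     = card {c \<in> diagram (ys @ [m]). P c} + (if P (length ys, m) then 1 else 0)"
proof -
  have "(length ys, m) \<notin> diagram (ys @ [m])"
    unfolding diagram_snoc by (auto simp: diagram_def)
  moreover have "finite {c \<in> diagram (ys @ [m]). P c}"
    using finite_diagram by simp
  moreover have "{c \<in> insert (length ys, m) (diagram (ys @ [m])). P c}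
      = (if P (length ys, m) then insert (length ys, m) else id) {c \<in> diagram (ys @ [m]). P c}"
    by auto
  ultimately show ?thesis
    unfolding diagram_snoc_Suc by simp
qed

definition odd_cells :: "nat list \<Rightarrow> nat" where
  "odd_cells xs = card {c \<in> diagram xs. odd (fst c + snd c)}"

lemma srank_cong_odd_cells:
  assumes "sorted_wrt (\<ge>) xs"
  shows "[srank xs = 2 * int (odd_cells xs)] (mod 4)"
  using assms
proof (induction rule: sorted_partition_induct)
  case Nil
  then show ?case by (simp add: srank_Nil odd_cells_def diagram_def)
next
  case (snoc_0 ys)
  have "srank (ys @ [0]) = srank ys"
    using srank_mset_eq[of "ys @ [0]" "0 # ys"] srank_Cons_0 by simp
  then show ?case using snoc_0.IH by (simp add: odd_cells_def diagram_snoc_0)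
next
  case (snoc_Suc ys m)
  define d :: int where "d = (if even (Suc m + length ys) then 2 else 0)"
  have "\<forall>y\<in>set ys. m < y" using snoc_Suc.hyps by (auto simp: sorted_wrt_append)
  then have "[srank (Suc m # ys) = srank (m # ys) + d] (mod 4)"
    using srank_Cons_Suc_cong[of m ys] by (simp add: filter_id_conv d_def)
  moreover have "srank (ys @ [k]) = srank (k # ys)" for k
    by (rule srank_mset_eq) simp
  ultimately have "[srank (ys @ [Suc m]) = srank (ys @ [m]) + d] (mod 4)"
    by simp
  moreover have "[srank (ys @ [m]) + d = 2 * int (odd_cells (ys @ [m])) + d] (mod 4)"
    using snoc_Suc.IH by (rule cong_add) simp
  moreover have "2 * int (odd_cells (ys @ [m])) + d = 2 * int (odd_cells (ys @ [Suc m]))"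
    unfolding odd_cells_def card_diagram_snoc_Suc d_def by simp
  ultimately show ?case by (metis cong_trans)
qed

section \<open>Beta-sets and Maya diagrams\<close>

definition part_at :: "nat list \<Rightarrow> nat \<Rightarrow> nat" where
  "part_at xs i = (if i < length xs then xs ! i else 0)"

definition beta :: "nat list \<Rightarrow> nat \<Rightarrow> int" where
  "beta xs i = int (part_at xs i) - int i - 1"

lemma part1_Suc: "part1 xs (Suc i) = part_at xs i"
  unfolding part1_def part_at_def by simp

lemma beta_set_eq_range: "beta_set xs = range (beta xs)"
proof -
  have "beta_set xs = (\<lambda>j. int (part1 xs j) - int j) ` {1..}"
    unfolding beta_set_def by auto
  also have "{1..} = range Suc"
    by (auto dest: Suc_le_D)
  finally show ?thesis
    by (simp add: image_image part1_Suc beta_def algebra_simps)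
qed

lemma diagram_eq_part_at: "diagram xs = {(i, j). j < part_at xs i}"
  unfolding diagram_def part_at_def by (auto split: if_splits)

lemma part_at_eq_0: "length xs \<le> i \<Longrightarrow> part_at xs i = 0"
  by (simp add: part_at_def)

lemma part_at_pos_iff: assumes "is_partition xs" shows "0 < part_at xs i \<longleftrightarrow> i < length xs"
proof (cases "i < length xs")
  case True
  have "xs ! i \<noteq> 0"
  proof
    assume "xs ! i = 0"
    then have "0 \<in> set xs" using True by (metis nth_mem)
    then show False using assms unfolding is_partition_def by simp
  qed
  then show ?thesis using True unfolding part_at_def by simp
qed (simp add: part_at_def)

lemma part_at_antimono:
  assumes "sorted_wrt (\<ge>) xs" "i \<le> j" shows "part_at xs j \<le> part_at xs i"
proof (cases "i < j \<and> j < length xs")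
  case True
  then show ?thesis using sorted_wrt_nth_less[OF assms(1)] unfolding part_at_def by simp
next
  case False
  then show ?thesis using assms(2) unfolding part_at_def by auto
qed

lemma part_at_snoc_0: "part_at (ys @ [0]) = part_at ys"
  by (simp add: part_at_def nth_append fun_eq_iff)

lemma beta_less: "sorted_wrt (\<ge>) xs \<Longrightarrow> i < j \<Longrightarrow> beta xs j < beta xs i"
  using part_at_antimono[of xs i j] unfolding beta_def by simp

lemma beta_antimono: "sorted_wrt (\<ge>) xs \<Longrightarrow> i \<le> j \<Longrightarrow> beta xs j \<le> beta xs i"
  using beta_less[of xs i j] by (cases "i = j") auto

lemma inj_beta: "sorted_wrt (\<ge>) xs \<Longrightarrow> inj (beta xs)"
  by (rule injI) (metis beta_less less_irrefl linorder_neqE_nat)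

lemma beta_le: "sorted_wrt (\<ge>) xs \<Longrightarrow> beta xs i \<le> beta xs 0 - int i"
  using part_at_antimono[of xs 0 i] unfolding beta_def by simp

text \<open>Maya diagrams; elements are called beads and non-elements gaps.\<close>
definition maya :: "int set \<Rightarrow> bool" where
  "maya B \<longleftrightarrow> (\<exists>N. (\<forall>x. x < - N \<longrightarrow> x \<in> B) \<and> (\<forall>x. x > N \<longrightarrow> x \<notin> B))"

lemma maya_beta_set: assumes "sorted_wrt (\<ge>) xs" shows "maya (beta_set xs)"
proof -
  define N where "N = int (length xs) + beta xs 0 + 2"
  have "x \<in> beta_set xs" if "x < - N" for x
  proof -
    have "x = beta xs (nat (- x - 1))"
      using that part_at_eq_0[of xs "nat (- x - 1)"] unfolding N_def beta_def part_at_def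
      by (auto split: if_splits)
    then show ?thesis unfolding beta_set_eq_range by auto
  qed
  moreover have "x \<notin> beta_set xs" if "x > N" for x
  proof
    assume "x \<in> beta_set xs"
    then obtain i where "x = beta xs i" unfolding beta_set_eq_range by auto
    then have "x \<le> beta xs 0" using beta_le[OF assms, of i] by simp
    moreover have "beta xs 0 < N" unfolding N_def beta_def part_at_def by auto
    ultimately show False using that by simp
  qed
  ultimately show ?thesis unfolding maya_def by blast
qed

lemma maya_insert: assumes "maya B" shows "maya (insert y B)"
proof -
  obtain N where "\<forall>x. x < - N \<longrightarrow> x \<in> B" "\<forall>x. x > N \<longrightarrow> x \<notin> B"
    using assms unfolding maya_def by blast
  then show ?thesis unfolding maya_def by (intro exI[of _ "max N \<bar>y\<bar>"]) auto
qed

lemma maya_remove: assumes "maya B" shows "maya (B - {y})"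
proof -
  obtain N where "\<forall>x. x < - N \<longrightarrow> x \<in> B" "\<forall>x. x > N \<longrightarrow> x \<notin> B"
    using assms unfolding maya_def by blast
  then show ?thesis unfolding maya_def by (intro exI[of _ "max N \<bar>y\<bar>"]) auto
qed

lemma maya_finite_beads_above: assumes "maya B" shows "finite {x \<in> B. a \<le> x}"
proof -
  obtain N where "\<forall>x. x > N \<longrightarrow> x \<notin> B" using assms unfolding maya_def by blast
  then have "{x \<in> B. a \<le> x} \<subseteq> {a..N}" by (auto simp: not_less[symmetric])
  then show ?thesis by (rule finite_subset) simp
qed

lemma maya_finite_gaps_below: assumes "maya B" shows "finite {x. x \<notin> B \<and> x < a}"
proof -
  obtain N where "\<forall>x. x < - N \<longrightarrow> x \<in> B" using assms unfolding maya_def by blast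
  then have "{x. x \<notin> B \<and> x < a} \<subseteq> {-N..a}" by (auto simp: not_less[symmetric])
  then show ?thesis by (rule finite_subset) simp
qed

section \<open>Charges and the n-vector\<close>

definition runner_charge :: "nat \<Rightarrow> int set \<Rightarrow> nat \<Rightarrow> int" where
  "runner_charge t B i = int (card {x \<in> B. x mod int t = int i \<and> 0 \<le> x})
     - int (card {x. x \<notin> B \<and> x mod int t = int i \<and> x < 0})"

definition charge :: "int set \<Rightarrow> int" where
  "charge R = runner_charge 1 R 0"

lemma runner_charge_remove:
  assumes B: "maya B" and x: "x \<in> B"
  shows "runner_charge t (B - {x}) i = runner_charge t B i - (if x mod int t = int i then 1 else 0)"
proof -
  let ?P = "\<lambda>x. x mod int t = int i"
  have f1: "finite {y \<in> B. ?P y \<and> 0 \<le> y}"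
    by (rule finite_subset[OF _ maya_finite_beads_above[OF B, of 0]]) auto
  have f2: "finite {y. y \<notin> B \<and> ?P y \<and> y < 0}"
    by (rule finite_subset[OF _ maya_finite_gaps_below[OF B, of 0]]) auto
  show ?thesis
  proof (cases "0 \<le> x")
    case True
    have s1: "{y \<in> B - {x}. ?P y \<and> 0 \<le> y} = {y \<in> B. ?P y \<and> 0 \<le> y} - {x}" by auto
    have s2: "{y. y \<notin> B - {x} \<and> ?P y \<and> y < 0} = {y. y \<notin> B \<and> ?P y \<and> y < 0}"
      using True by auto
    show ?thesis
    proof (cases "?P x")
      case px: True
      have xin: "x \<in> {y \<in> B. ?P y \<and> 0 \<le> y}" using x True px by simp
      then have "card {y \<in> B. ?P y \<and> 0 \<le> y} \<ge> 1"
        using f1 card_gt_0_iff[of "{y \<in> B. ?P y \<and> 0 \<le> y}"] by auto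
      then show ?thesis
        unfolding runner_charge_def s1 s2 using f1 xin px
        by (simp add: card_Diff_singleton of_nat_diff)
    next
      case False
      then have "{y \<in> B. ?P y \<and> 0 \<le> y} - {x} = {y \<in> B. ?P y \<and> 0 \<le> y}" by auto
      then show ?thesis unfolding runner_charge_def s1 s2 using False by simp
    qed
  next
    case False
    have s1: "{y \<in> B - {x}. ?P y \<and> 0 \<le> y} = {y \<in> B. ?P y \<and> 0 \<le> y}" using False by auto
    have s2: "{y. y \<notin> B - {x} \<and> ?P y \<and> y < 0}
        = (if ?P x then insert x else id) {y. y \<notin> B \<and> ?P y \<and> y < 0}"
      using False x by auto
    show ?thesis unfolding runner_charge_def s1 s2 using f2 x by simp
  qed
qed

lemma runner_charge_move:
  assumes "maya B" "x \<in> B" "y \<notin> B"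
  shows "runner_charge t (insert y (B - {x})) i
    = runner_charge t B i
      - (if x mod int t = int i then 1 else 0) + (if y mod int t = int i then 1 else 0)"
proof -
  have "maya (insert y (B - {x}))" by (intro maya_insert maya_remove assms(1))
  moreover have "y \<in> insert y (B - {x})" "insert y (B - {x}) - {y} = B - {x}"
    using assms(3) by auto
  ultimately have "runner_charge t (B - {x}) i
      = runner_charge t (insert y (B - {x})) i - (if y mod int t = int i then 1 else 0)"
    using runner_charge_remove by metis
  then show ?thesis using runner_charge_remove[OF assms(1,2)] by simp
qed

definition runner :: "nat \<Rightarrow> int set \<Rightarrow> nat \<Rightarrow> int set" where
  "runner t B c = {k. int t * k + int c \<in> B}"

lemma maya_runner: assumes "maya B" "t \<ge> 1" shows "maya (runner t B c)"
proof -
  obtain N where N: "\<forall>x. x < - N \<longrightarrow> x \<in> B" "\<forall>x. x > N \<longrightarrow> x \<notin> B"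
    using assms(1) unfolding maya_def by blast
  have "int t * k + int c \<in> B" if "k < - (\<bar>N\<bar> + int c)" for k
  proof -
    have "int t * k \<le> 1 * k" using that assms(2) by (intro mult_right_mono_neg) auto
    then show ?thesis using that N(1) by simp
  qed
  moreover have "int t * k + int c \<notin> B" if "k > \<bar>N\<bar> + int c" for k
  proof -
    have "1 * k \<le> int t * k" using that assms(2) by (intro mult_right_mono) auto
    then show ?thesis using that N(2) by simp
  qed
  ultimately show ?thesis unfolding maya_def runner_def by (intro exI[of _ "\<bar>N\<bar> + int c"]) auto
qed

lemma charge_runner:
  assumes "c < t"
  shows "charge (runner t B c) = runner_charge t B c"
proof -
  let ?f = "\<lambda>k. int t * k + int c"
  have inj: "inj ?f" using assms by (auto intro!: injI)
  have nonneg: "0 \<le> ?f k \<longleftrightarrow> 0 \<le> k" for k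
  proof
    assume "0 \<le> ?f k"
    show "0 \<le> k"
    proof (rule ccontr)
      assume "\<not> 0 \<le> k"
      then have "int t * k \<le> int t * (-1)" by (intro mult_left_mono) auto
      then show False using \<open>0 \<le> ?f k\<close> assms by simp
    qed
  qed simp
  have residue: "x mod int t = int c \<longleftrightarrow> x \<in> range ?f" for x
  proof
    assume "x mod int t = int c"
    then have "x = ?f (x div int t)" by (metis add.commute mult_div_mod_eq)
    then show "x \<in> range ?f" by blast
  next
    assume "x \<in> range ?f"
    then show "x mod int t = int c" using assms by auto
  qed
  have "?f ` {k \<in> runner t B c. k mod int 1 = int 0 \<and> 0 \<le> k} = {x \<in> B. x mod int t = int c \<and> 0 \<le> x}"
    unfolding runner_def residue using nonneg by auto
  moreover have "?f ` {k. k \<notin> runner t B c \<and> k mod int 1 = int 0 \<and> k < 0}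
      = {x. x \<notin> B \<and> x mod int t = int c \<and> x < 0}"
    unfolding runner_def residue using nonneg by (auto simp: not_le[symmetric])
  ultimately show ?thesis
    unfolding charge_def runner_charge_def
    by (metis (no_types, lifting) card_image inj inj_on_subset subset_UNIV)
qed

lemma beta_set_snoc_Suc:
  assumes sorted: "sorted_wrt (\<ge>) (ys @ [Suc m])"
  defines "h \<equiv> int m - int (length ys)"
  shows "h \<in> beta_set (ys @ [Suc m])" and "h - 1 \<notin> beta_set (ys @ [Suc m])"
    and "beta_set (ys @ [m]) = insert (h - 1) (beta_set (ys @ [Suc m]) - {h})"
proof -
  let ?xs = "ys @ [Suc m]" and ?xs' = "ys @ [m]" and ?p = "length ys"
  have sorted': "sorted_wrt (\<ge>) ?xs'" using sorted by (auto simp: sorted_wrt_append)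
  have h: "beta ?xs ?p = h" unfolding h_def beta_def part_at_def by simp
  have upd: "beta ?xs' = (beta ?xs)(?p := h - 1)"
    by (simp add: fun_eq_iff beta_def part_at_def nth_append h_def)
  show "h \<in> beta_set ?xs" unfolding beta_set_eq_range h[symmetric] by simp
  have fresh: "h - 1 \<notin> range (beta ?xs)"
  proof
    assume "h - 1 \<in> range (beta ?xs)"
    then obtain j where j: "h - 1 = beta ?xs j" by blast
    then have "j \<noteq> ?p" using h by auto
    then have "beta ?xs' j = beta ?xs' ?p" using j upd by simp
    then show False using inj_beta[OF sorted'] \<open>j \<noteq> ?p\<close> by (meson injD)
  qed
  then show "h - 1 \<notin> beta_set ?xs" unfolding beta_set_eq_range .
  have "range (beta ?xs') = insert (h - 1) (beta ?xs ` (UNIV - {?p}))"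
    unfolding upd fun_upd_image by simp
  also have "beta ?xs ` (UNIV - {?p}) = range (beta ?xs) - {h}"
    using inj_beta[OF sorted] h by (simp add: image_set_diff)
  finally show "beta_set ?xs' = insert (h - 1) (beta_set ?xs - {h})"
    unfolding beta_set_eq_range .
qed

lemma label_count_snoc_Suc:
  "label_count t (ys @ [Suc m]) j = label_count t (ys @ [m]) j
     + (if (int m - int (length ys)) mod int t = int j then 1 else 0)"
proof -
  have pairs: "{(r, c) \<in> diagram xs. (int c - int r) mod int t = int j}
      = {p \<in> diagram xs. (int (snd p) - int (fst p)) mod int t = int j}" for xs
    by auto
  show ?thesis unfolding label_count_def pairs card_diagram_snoc_Suc by simp
qed

lemma nvec_eq_runner_charge:
  assumes "sorted_wrt (\<ge>) xs" "i < t"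
  shows "nvec t xs i = runner_charge t (beta_set xs) i"
  using assms(1)
proof (induction rule: sorted_partition_induct)
  case Nil
  have empty: "beta_set [] = {x. x < 0}"
    unfolding beta_set_eq_range beta_def part_at_def
    by (auto simp: image_iff intro!: exI[of _ "nat (- _ - 1)"])
  have no_beads: "{x \<in> {x. x < 0}. x mod int t = int i \<and> 0 \<le> x} = {}"
    and no_gaps: "{x. x \<notin> {x. x < 0} \<and> x mod int t = int i \<and> x < 0} = {}"
    by auto
  show ?case
    unfolding nvec_def label_count_def runner_charge_def empty no_beads no_gaps
    by (simp add: diagram_def)
next
  case (snoc_0 ys)
  have "beta_set (ys @ [0]) = beta_set ys"
    unfolding beta_set_eq_range beta_def part_at_snoc_0 ..
  then show ?case using snoc_0.IH by (simp add: nvec_def label_count_def diagram_snoc_0)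
next
  case (snoc_Suc ys m)
  define h where "h = int m - int (length ys)"
  have "h mod int t = (int i + 1) mod int t \<longleftrightarrow> (h - 1) mod int t = int i mod int t"
    unfolding mod_eq_dvd_iff by (simp add: algebra_simps)
  then have next_label: "h mod int t = int ((i + 1) mod t) \<longleftrightarrow> (h - 1) mod int t = int i"
    using \<open>i < t\<close> by (simp add: zmod_int add.commute)
  have "nvec t (ys @ [Suc m]) i = nvec t (ys @ [m]) i
      + (if h mod int t = int i then 1 else 0) - (if (h - 1) mod int t = int i then 1 else 0)"
    unfolding nvec_def label_count_snoc_Suc h_def[symmetric] next_label by simp
  moreover have "runner_charge t (beta_set (ys @ [m])) i
      = runner_charge t (beta_set (ys @ [Suc m])) i
        - (if h mod int t = int i then 1 else 0) + (if (h - 1) mod int t = int i then 1 else 0)"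
    unfolding beta_set_snoc_Suc(3)[OF snoc_Suc.hyps, folded h_def]
    by (rule runner_charge_move[OF maya_beta_set[OF snoc_Suc.hyps]
          beta_set_snoc_Suc(1,2)[OF snoc_Suc.hyps, folded h_def]])
  ultimately show ?case using snoc_Suc.IH by simp
qed

section \<open>Partitions read off Maya diagrams\<close>

definition covered_gaps :: "int set \<Rightarrow> int set" where
  "covered_gaps R = {g. g \<notin> R \<and> count_above R g > 0}"

definition maya_partition :: "int set \<Rightarrow> nat list" where
  "maya_partition R = rev (sort (map (count_above R) (sorted_list_of_set (covered_gaps R))))"

lemma quotient_comp_eq: "quotient_comp t xs c = maya_partition (runner t (beta_set xs) c)"
  unfolding quotient_comp_def maya_partition_def covered_gaps_def beta_runner_def runner_def Let_def
  ..

lemma mset_sorted_list_of_set: "mset (sorted_list_of_set A) = mset_set A"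
  by (metis mset_sorted_list_of_multiset sorted_list_of_mset_set)

lemma mset_maya_partition:
  "mset (maya_partition R) = image_mset (count_above R) (mset_set (covered_gaps R))"
  unfolding maya_partition_def by (simp add: mset_sorted_list_of_set)

lemma maya_finite_beads_greater: "maya R \<Longrightarrow> finite {s \<in> R. g < s}"
  using maya_finite_beads_above[of R "g + 1"] by (simp add: zless_iff_Suc_zadd add1_zle_eq)

lemma count_above_antimono: "maya R \<Longrightarrow> g \<le> g' \<Longrightarrow> count_above R g' \<le> count_above R g"
  unfolding count_above_def by (rule card_mono[OF maya_finite_beads_greater]) auto

lemma count_above_bead:
  assumes "maya R" "k \<in> R" shows "count_above R (k - 1) = Suc (count_above R k)"
proof -
  have "{s \<in> R. k - 1 < s} = insert k {s \<in> R. k < s}" using assms(2) by auto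
  then show ?thesis
    unfolding count_above_def using maya_finite_beads_greater[OF assms(1), of k] by simp
qed

lemma finite_covered_gaps: assumes "maya R" shows "finite (covered_gaps R)"
proof -
  obtain N where N: "\<forall>x. x > N \<longrightarrow> x \<notin> R" using assms unfolding maya_def by blast
  have "covered_gaps R \<subseteq> {g. g \<notin> R \<and> g < N + 1}"
  proof
    fix g assume g: "g \<in> covered_gaps R"
    then have "{s \<in> R. g < s} \<noteq> {}" unfolding covered_gaps_def count_above_def by fastforce
    then obtain s where "s \<in> R" "g < s" by blast
    then show "g \<in> {g. g \<notin> R \<and> g < N + 1}" using g N unfolding covered_gaps_def by force
  qed
  then show ?thesis using maya_finite_gaps_below[OF assms] by (rule finite_subset)
qed

text \<open>Moving k to k + 1 changes the sum of the two counts by exactly one, so its parity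
  differs from that of k by a constant, read off at k = 0.\<close>
lemma beads_gaps_parity:
  assumes R: "maya R"
  shows "even (int (card {s \<in> R. k \<le> s}) + int (card {g. g \<notin> R \<and> g < k}) - charge R - k)"
proof -
  define F where "F k = int (card {s \<in> R. k \<le> s}) + int (card {g. g \<notin> R \<and> g < k})" for k
  have step: "F (k + 1) = F k + (if k \<in> R then -1 else 1)" for k
  proof (cases "k \<in> R")
    case True
    have "{s \<in> R. k \<le> s} = insert k {s \<in> R. k + 1 \<le> s}"
      and "{g. g \<notin> R \<and> g < k + 1} = {g. g \<notin> R \<and> g < k}"
      using True by (auto simp: le_less)
    then show ?thesis unfolding F_def using maya_finite_beads_above[OF R, of "k + 1"] True by simp
  next
    case False
    have "{s \<in> R. k \<le> s} = {s \<in> R. k + 1 \<le> s}"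
      and "{g. g \<notin> R \<and> g < k + 1} = insert k {g. g \<notin> R \<and> g < k}"
      using False by (auto simp: le_less)
    then show ?thesis unfolding F_def using maya_finite_gaps_below[OF R, of k] False by simp
  qed
  have "even (F k - F 0 - k)"
  proof (induction k rule: int_induct[where k = 0])
    case (step1 i)
    then show ?case using step[of i] by (cases "i \<in> R") auto
  next
    case (step2 i)
    then show ?case using step[of "i - 1"] by (cases "i - 1 \<in> R") auto
  qed simp
  moreover have "F 0 = charge R + 2 * int (card {g. g \<notin> R \<and> g < 0})"
    unfolding F_def charge_def runner_charge_def by simp
  ultimately show ?thesis unfolding F_def by presburger
qed

lemma count_above_bead_move:
  assumes "maya R" "k \<in> R" "k - 1 \<notin> R" "g \<notin> R - {k}" "g \<noteq> k - 1"
  shows "count_above (insert (k - 1) (R - {k})) g = count_above R g"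
proof (cases "g < k - 1")
  case True
  have "{s \<in> insert (k - 1) (R - {k}). g < s} = insert (k - 1) ({s \<in> R. g < s} - {k})"
    using True by auto
  moreover have fin: "finite {s \<in> R. g < s}" by (rule maya_finite_beads_greater[OF assms(1)])
  ultimately have "card {s \<in> insert (k - 1) (R - {k}). g < s} = Suc (card ({s \<in> R. g < s} - {k}))"
    using assms(3) by simp
  also have "\<dots> = card {s \<in> R. g < s}"
    using True assms(2) card.remove[OF fin, of k] by simp
  finally show ?thesis unfolding count_above_def .
next
  case False
  then have "k \<le> g" using assms(5) by simp
  then have "{s \<in> insert (k - 1) (R - {k}). g < s} = {s \<in> R. g < s}" by auto
  then show ?thesis unfolding count_above_def by simp
qed

lemma covered_gaps_bead_move:
  assumes "maya R" "k \<in> R" "k - 1 \<notin> R"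
  shows "k - 1 \<in> covered_gaps R"
    and "covered_gaps (insert (k - 1) (R - {k}))
      = (covered_gaps R - {k - 1}) \<union> (if 0 < count_above R k then {k} else {})"
proof -
  show "k - 1 \<in> covered_gaps R"
    unfolding covered_gaps_def using count_above_bead[OF assms(1,2)] assms(3) by simp
  have others: "g \<in> covered_gaps (insert (k - 1) (R - {k})) \<longleftrightarrow> g \<in> covered_gaps R - {k - 1}"
    if "g \<noteq> k" for g
  proof (cases "g = k - 1")
    case False
    then show ?thesis
      using that count_above_bead_move[OF assms, of g] unfolding covered_gaps_def by auto
  qed (simp add: covered_gaps_def)
  have at_k: "k \<in> covered_gaps (insert (k - 1) (R - {k})) \<longleftrightarrow> 0 < count_above R k"
    using count_above_bead_move[OF assms, of k] unfolding covered_gaps_def by simp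
  have "k \<notin> covered_gaps R" using assms(2) unfolding covered_gaps_def by simp
  show "covered_gaps (insert (k - 1) (R - {k}))
      = (covered_gaps R - {k - 1}) \<union> (if 0 < count_above R k then {k} else {})"
  proof (rule set_eqI)
    fix g
    show "g \<in> covered_gaps (insert (k - 1) (R - {k}))
        \<longleftrightarrow> g \<in> (covered_gaps R - {k - 1}) \<union> (if 0 < count_above R k then {k} else {})"
      using others[of g] at_k \<open>k \<notin> covered_gaps R\<close> by (cases "g = k") auto
  qed
qed

lemma mset_maya_partition_bead_move:
  assumes "maya R" "k \<in> R" "k - 1 \<notin> R"
  defines "c \<equiv> count_above R k"
    and "M \<equiv> image_mset (count_above R) (mset_set (covered_gaps R - {k - 1}))"
  shows "mset (maya_partition R) = add_mset (Suc c) M"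
    and "mset (maya_partition (insert (k - 1) (R - {k}))) = (if c = 0 then M else add_mset c M)"
proof -
  have fin: "finite (covered_gaps R - {k - 1})" using finite_covered_gaps[OF assms(1)] by simp
  have "covered_gaps R = insert (k - 1) (covered_gaps R - {k - 1})"
    using covered_gaps_bead_move(1)[OF assms(1-3)] by auto
  then have "mset_set (covered_gaps R) = add_mset (k - 1) (mset_set (covered_gaps R - {k - 1}))"
    using mset_set.insert[OF fin, of "k - 1"] by simp
  then show "mset (maya_partition R) = add_mset (Suc c) M"
    unfolding mset_maya_partition M_def c_def count_above_bead[OF assms(1,2), symmetric] by simp
  have same:
    "image_mset (count_above (insert (k - 1) (R - {k}))) (mset_set (covered_gaps R - {k - 1})) = M"
    unfolding M_def
  proof (rule image_mset_cong)
    fix g assume "g \<in># mset_set (covered_gaps R - {k - 1})"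
    then have "g \<notin> R" "g \<noteq> k - 1" using fin unfolding covered_gaps_def by auto
    then show "count_above (insert (k - 1) (R - {k})) g = count_above R g"
      using count_above_bead_move[OF assms(1-3)] by simp
  qed
  have "k \<notin> covered_gaps R - {k - 1}" using assms(2) unfolding covered_gaps_def by simp
  then show "mset (maya_partition (insert (k - 1) (R - {k}))) = (if c = 0 then M else add_mset c M)"
    unfolding mset_maya_partition covered_gaps_bead_move(2)[OF assms(1-3)]
    using same fin count_above_bead_move[OF assms(1-3), of k] by (auto simp: c_def)
qed

lemma psize_mset_eq: "mset xs = mset ys \<Longrightarrow> psize xs = psize ys"
  unfolding psize_def by (metis sum_mset_sum_list)

lemma card_gaps_beyond_bead_move:
  assumes "maya R" "k \<in> R" "k - 1 \<notin> R"
  shows "card {g \<in> covered_gaps R - {k - 1}. count_above R k < count_above R g}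
    = card {g. g \<notin> R \<and> g < k - 1}"
proof -
  have "g \<in> covered_gaps R - {k - 1} \<and> count_above R k < count_above R g \<longleftrightarrow> g \<notin> R \<and> g < k - 1"
    for g
  proof
    assume g: "g \<in> covered_gaps R - {k - 1} \<and> count_above R k < count_above R g"
    then have "g \<notin> R" "g \<noteq> k - 1" unfolding covered_gaps_def by auto
    moreover have "\<not> k < g"
      using g count_above_antimono[OF assms(1), of k g] by auto
    ultimately show "g \<notin> R \<and> g < k - 1" using assms(2) by (cases "g = k") auto
  next
    assume g: "g \<notin> R \<and> g < k - 1"
    then have "count_above R (k - 1) \<le> count_above R g"
      using count_above_antimono[OF assms(1)] by simp
    then show "g \<in> covered_gaps R - {k - 1} \<and> count_above R k < count_above R g"
      using g count_above_bead[OF assms(1,2)] unfolding covered_gaps_def by simp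
  qed
  then show ?thesis by simp
qed

lemma parity_bead_move:
  assumes "maya R" "k \<in> R" "k - 1 \<notin> R"
  shows "even (Suc (count_above R k) + card {g. g \<notin> R \<and> g < k - 1}) \<longleftrightarrow> odd (k + charge R)"
proof -
  have "{s \<in> R. k - 1 < s} = {s \<in> R. k \<le> s}" by auto
  then have "Suc (count_above R k) = card {s \<in> R. k \<le> s}"
    using count_above_bead[OF assms(1,2)] unfolding count_above_def by simp
  moreover have "{g. g \<notin> R \<and> g < k} = insert (k - 1) {g. g \<notin> R \<and> g < k - 1}"
    using assms(3) by auto
  then have "card {g. g \<notin> R \<and> g < k} = Suc (card {g. g \<notin> R \<and> g < k - 1})"
    using maya_finite_gaps_below[OF assms(1), of "k - 1"] by simp
  ultimately show ?thesis using beads_gaps_parity[OF assms(1), of k] by presburger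
qed

lemma maya_partition_bead_move:
  assumes "maya R" "k \<in> R" "k - 1 \<notin> R"
  shows "psize (maya_partition R) = Suc (psize (maya_partition (insert (k - 1) (R - {k}))))"
    and "[srank (maya_partition R) = srank (maya_partition (insert (k - 1) (R - {k})))
           + (if odd (k + charge R) then 2 else 0)] (mod 4)"
proof -
  define c where "c = count_above R k"
  define G0 where "G0 = covered_gaps R - {k - 1}"
  define ys where "ys = map (count_above R) (sorted_list_of_set G0)"
  have fin: "finite G0" using finite_covered_gaps[OF assms(1)] by (simp add: G0_def)
  have ys: "image_mset (count_above R) (mset_set G0) = mset ys"
    by (simp add: ys_def mset_sorted_list_of_set)
  note move = mset_maya_partition_bead_move[OF assms]
  have old: "mset (maya_partition R) = mset (Suc c # ys)"
    unfolding move(1) c_def[symmetric] G0_def[symmetric] ys by simp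
  have new: "psize (maya_partition (insert (k - 1) (R - {k}))) = psize (c # ys)
      \<and> srank (maya_partition (insert (k - 1) (R - {k}))) = srank (c # ys)"
  proof (cases "c = 0")
    case True
    then have "mset (maya_partition (insert (k - 1) (R - {k}))) = mset ys"
      unfolding move(2) c_def[symmetric] G0_def[symmetric] ys by simp
    then have "psize (maya_partition (insert (k - 1) (R - {k}))) = psize ys"
      and "srank (maya_partition (insert (k - 1) (R - {k}))) = srank ys"
      by (rule psize_mset_eq, rule srank_mset_eq)
    then show ?thesis using True srank_Cons_0[of ys] by (simp add: psize_def)
  next
    case False
    then have "mset (maya_partition (insert (k - 1) (R - {k}))) = mset (c # ys)"
      unfolding move(2) c_def[symmetric] G0_def[symmetric] ys by simp
    then show ?thesis by (intro conjI psize_mset_eq srank_mset_eq)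
  qed
  show "psize (maya_partition R) = Suc (psize (maya_partition (insert (k - 1) (R - {k}))))"
    unfolding psize_mset_eq[OF old] new[THEN conjunct1] by (simp add: psize_def)
  have "length (filter (\<lambda>y. c < y) ys) = card {g \<in> G0. c < count_above R g}"
    unfolding ys_def using fin by (simp add: distinct_length_filter Int_def conj_commute)
  also have "\<dots> = card {g. g \<notin> R \<and> g < k - 1}"
    unfolding G0_def c_def by (rule card_gaps_beyond_bead_move[OF assms])
  finally have "even (Suc c + length (filter (\<lambda>y. c < y) ys)) \<longleftrightarrow> odd (k + charge R)"
    using parity_bead_move[OF assms] by (simp add: c_def)
  then show "[srank (maya_partition R) = srank (maya_partition (insert (k - 1) (R - {k})))
      + (if odd (k + charge R) then 2 else 0)] (mod 4)"
    unfolding srank_mset_eq[OF old] new[THEN conjunct2] using srank_Cons_Suc_cong[of c ys] by simp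
qed

section \<open>Rim hooks as bead moves\<close>

text \<open>The skew shape between the inner row lengths g and the outer row lengths l is a border
  strip in rows r to s: consecutive rows of it overlap in exactly one column.\<close>
definition border_strip_rows :: "(nat \<Rightarrow> nat) \<Rightarrow> (nat \<Rightarrow> nat) \<Rightarrow> nat \<Rightarrow> nat \<Rightarrow> bool" where
  "border_strip_rows l g r s \<longleftrightarrow> r \<le> s \<and> (\<forall>i. g i \<le> l i) \<and> (\<forall>i. g i < l i \<longleftrightarrow> r \<le> i \<and> i \<le> s)
     \<and> (\<forall>i. r \<le> i \<longrightarrow> i < s \<longrightarrow> g i + 1 = l (Suc i))"

lemma sum_row_differences:
  assumes "\<And>i. r \<le> i \<Longrightarrow> i < s \<Longrightarrow> g i + 1 = l (Suc i)" "r \<le> s"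
  shows "(\<Sum>i\<in>{r..s}. int (l i) - int (g i)) = int (l r) - int (g s) + int s - int r"
  using assms
proof (induction s)
  case (Suc s)
  show ?case
  proof (cases "r = Suc s")
    case False
    then have "r \<le> s" using Suc.prems by auto
    then have "int (l (Suc s)) = int (g s) + 1" using Suc.prems by force
    moreover have "{r..Suc s} = insert (Suc s) {r..s}" using \<open>r \<le> s\<close> by auto
    ultimately show ?thesis using Suc \<open>r \<le> s\<close> by simp
  qed simp
qed simp

lemma card_border_strip:
  assumes "border_strip_rows l g r s"
  shows "int (card ({(i, j). j < l i} - {(i, j). j < g i})) = int (l r) - int (g s) + int s - int r"
proof -
  have "{(i, j). j < l i} - {(i, j). j < g i} = Sigma {r..s} (\<lambda>i. {g i..<l i})"
    using assms unfolding border_strip_rows_def by auto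
  then have "card ({(i, j). j < l i} - {(i, j). j < g i}) = (\<Sum>i\<in>{r..s}. l i - g i)"
    by (simp add: card_SigmaI)
  then have "int (card ({(i, j). j < l i} - {(i, j). j < g i}))
      = (\<Sum>i\<in>{r..s}. int (l i) - int (g i))"
    using assms unfolding border_strip_rows_def by (simp add: of_nat_diff)
  also have "\<dots> = int (l r) - int (g s) + int s - int r"
    using assms unfolding border_strip_rows_def by (intro sum_row_differences) auto
  finally show ?thesis .
qed

lemma rtrancl_crossing_edge:
  assumes "(a, b) \<in> R\<^sup>*" "P a" "\<not> P b"
  obtains x y where "(x, y) \<in> R" "P x" "\<not> P y"
  using assms by (induction rule: rtrancl_induct) blast+

lemma connected_skew_rows_overlap:
  assumes l: "\<And>i. l (Suc i) \<le> l i" and g: "\<And>i. g (Suc i) \<le> g i"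
    and con: "cells_connected ({(i, j). j < l i} - {(i, j). j < g i})"
    and n22: "no_2x2 ({(i, j). j < l i} - {(i, j). j < g i})"
    and "g r < l r" "g s < l s" "r \<le> i" "i < s"
  shows "g i + 1 = l (Suc i)"
proof -
  let ?H = "{(i, j). j < l i} - {(i, j). j < g i}"
  have H: "(i, j) \<in> ?H \<longleftrightarrow> g i \<le> j \<and> j < l i" for i j by auto
  have "(r, g r) \<in> ?H" "(s, g s) \<in> ?H" using assms(5,6) by auto
  then have path: "((r, g r), (s, g s)) \<in> (cell_adj ?H)\<^sup>*"
    using con unfolding cells_connected_def by blast
  have "fst (r, g r) \<le> i" "\<not> fst (s, g s) \<le> i" using assms(7,8) by auto
  then obtain x y where "(x, y) \<in> cell_adj ?H" "fst x \<le> i" "\<not> fst y \<le> i"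
    using rtrancl_crossing_edge[OF path, of "\<lambda>p. fst p \<le> i"] by blast
  then have "x \<in> ?H" "y \<in> ?H" "fst x = i" "fst y = Suc i" "snd x = snd y"
    unfolding cell_adj_def by auto
  then have "g i \<le> snd x" "snd x < l (Suc i)"
    unfolding H by (cases x, cases y, auto)+
  moreover have "\<not> g i + 1 < l (Suc i)"
  proof
    assume "g i + 1 < l (Suc i)"
    then have "(i, g i) \<in> ?H" "(i + 1, g i) \<in> ?H" "(i, g i + 1) \<in> ?H" "(i + 1, g i + 1) \<in> ?H"
      using calculation l[of i] g[of i] unfolding H by auto
    then show False using n22 unfolding no_2x2_def by blast
  qed
  ultimately show ?thesis by linarith
qed

lemma rim_hook_removal_rows:
  assumes rh: "rim_hook_removal t xs ys" and t: "t \<ge> 1"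
  obtains r s where "border_strip_rows (part_at xs) (part_at ys) r s"
proof -
  define l where "l = part_at xs"
  define g where "g = part_at ys"
  have sx: "sorted_wrt (\<ge>) xs" and sy: "sorted_wrt (\<ge>) ys" and sub: "diagram ys \<subseteq> diagram xs"
    and cH: "card ({(i, j). j < l i} - {(i, j). j < g i}) = t"
    and con: "cells_connected ({(i, j). j < l i} - {(i, j). j < g i})"
    and n22: "no_2x2 ({(i, j). j < l i} - {(i, j). j < g i})"
    using rh unfolding rim_hook_removal_def is_partition_def l_def g_def diagram_eq_part_at by auto
  have le: "g i \<le> l i" for i
    using sub unfolding diagram_eq_part_at l_def g_def by (auto simp: subset_iff not_le[symmetric])
  have l: "l (Suc i) \<le> l i" and g: "g (Suc i) \<le> g i" for i
    unfolding l_def g_def using part_at_antimono sx sy by auto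
  define Rw where "Rw = {i. g i < l i}"
  have "Rw \<subseteq> {..<length xs}" unfolding Rw_def l_def part_at_def by (auto split: if_splits)
  then have finRw: "finite Rw" by (rule finite_subset) simp
  have "{(i, j). j < l i} - {(i, j). j < g i} \<noteq> {}"
  proof
    assume empty: "{(i, j). j < l i} - {(i, j). j < g i} = {}"
    have "t = 0" using cH unfolding empty by simp
    then show False using t by simp
  qed
  then obtain i j where "(i, j) \<in> {(i, j). j < l i} - {(i, j). j < g i}" by auto
  then have "i \<in> Rw" unfolding Rw_def by auto
  then have "Rw \<noteq> {}" by auto
  define r where "r = Min Rw"
  define s where "s = Max Rw"
  have "r \<in> Rw" "s \<in> Rw" using finRw \<open>Rw \<noteq> {}\<close> unfolding r_def s_def by simp_all
  then have "g r < l r" "g s < l s" "r \<le> s" using finRw unfolding Rw_def r_def s_def by auto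
  have mid: "g i + 1 = l (Suc i)" if "r \<le> i" "i < s" for i
    by (rule connected_skew_rows_overlap[OF l g con n22 \<open>g r < l r\<close> \<open>g s < l s\<close> that])
  have "g i < l i \<longleftrightarrow> r \<le> i \<and> i \<le> s" for i
  proof (cases "r < i \<and> i < s")
    case True
    then show ?thesis using mid[of i] le[of "Suc i"] l[of i] by simp
  next
    case False
    have "r \<le> i \<and> i \<le> s" if "i \<in> Rw" using finRw that unfolding r_def s_def by simp
    then show ?thesis using False \<open>r \<in> Rw\<close> \<open>s \<in> Rw\<close> unfolding Rw_def
      by (metis le_neq_implies_less mem_Collect_eq)
  qed
  then have "border_strip_rows l g r s"
    unfolding border_strip_rows_def using le mid \<open>r \<le> s\<close> by blast
  then show ?thesis using that unfolding l_def g_def by blast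
qed

lemma beta_border_strip:
  assumes "border_strip_rows (part_at xs) (part_at ys) r s"
  defines "\<sigma> \<equiv> \<lambda>i. if r \<le> i \<and> i < s then Suc i else i"
  shows "i \<noteq> s \<Longrightarrow> beta ys i = beta xs (\<sigma> i)"
    and "beta ys s = beta xs r - int (card (diagram xs - diagram ys))"
proof -
  show "beta ys i = beta xs (\<sigma> i)" if "i \<noteq> s"
  proof (cases "r \<le> i \<and> i < s")
    case True
    then show ?thesis using assms(1) unfolding border_strip_rows_def beta_def \<sigma>_def by force
  next
    case False
    then have "part_at ys i = part_at xs i"
      using that assms(1) unfolding border_strip_rows_def by (metis le_less le_neq_implies_less)
    then show ?thesis unfolding beta_def \<sigma>_def if_not_P[OF False] by simp
  qed
  show "beta ys s = beta xs r - int (card (diagram xs - diagram ys))"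
    using card_border_strip[OF assms(1)] unfolding diagram_eq_part_at beta_def by simp
qed

lemma card_border_strip_pos:
  assumes "border_strip_rows (part_at xs) (part_at ys) r s"
  shows "0 < card (diagram xs - diagram ys)"
proof -
  have "(r, part_at ys r) \<in> diagram xs - diagram ys"
    using assms unfolding border_strip_rows_def diagram_eq_part_at by auto
  then show ?thesis using finite_diagram[of xs] card_gt_0_iff by blast
qed

lemma beta_set_border_strip:
  assumes sx: "sorted_wrt (\<ge>) xs" and sy: "sorted_wrt (\<ge>) ys"
    and rows: "border_strip_rows (part_at xs) (part_at ys) r s"
  defines "b \<equiv> beta xs r" and "n \<equiv> int (card (diagram xs - diagram ys))"
  shows "b - n \<notin> beta_set xs" and "beta_set ys = insert (b - n) (beta_set xs - {b})"
proof -
  define \<sigma> where "\<sigma> = (\<lambda>i. if r \<le> i \<and> i < s then Suc i else i)"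
  have ys_s: "beta ys s = b - n" using beta_border_strip(2)[OF rows] unfolding b_def n_def .
  have "r \<le> s" using rows by (simp add: border_strip_rows_def)
  have "\<sigma> ` (UNIV - {s}) = UNIV - {r}"
  proof (intro set_eqI iffI)
    fix j assume "j \<in> \<sigma> ` (UNIV - {s})"
    then show "j \<in> UNIV - {r}" using \<open>r \<le> s\<close> unfolding \<sigma>_def by (auto split: if_splits)
  next
    fix j assume "j \<in> UNIV - {r}"
    then have "j = \<sigma> (if r < j \<and> j \<le> s then j - 1 else j)"
      and "(if r < j \<and> j \<le> s then j - 1 else j) \<noteq> s"
      using \<open>r \<le> s\<close> unfolding \<sigma>_def by auto
    then show "j \<in> \<sigma> ` (UNIV - {s})" by blast
  qed
  moreover have "beta ys ` (UNIV - {s}) = beta xs ` \<sigma> ` (UNIV - {s})"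
    unfolding image_image using beta_border_strip(1)[OF rows] by (auto simp: \<sigma>_def)
  ultimately have others: "beta ys ` (UNIV - {s}) = range (beta xs) - {b}"
    using inj_beta[OF sx] unfolding b_def by (simp add: image_set_diff)
  have "range (beta ys) = insert (beta ys s) (beta ys ` (UNIV - {s}))" by blast
  then show "beta_set ys = insert (b - n) (beta_set xs - {b})"
    unfolding beta_set_eq_range ys_s others .
  have "b - n \<noteq> b" using card_border_strip_pos[OF rows] unfolding n_def by simp
  moreover have "b - n \<notin> beta ys ` (UNIV - {s})"
    using inj_beta[OF sy] ys_s by (auto dest: injD)
  ultimately show "b - n \<notin> beta_set xs"
    unfolding beta_set_eq_range using others by blast
qed

lemma border_strip_rows_cell:
  assumes "border_strip_rows (part_at xs) (part_at ys) r s" "(i, j) \<in> diagram xs - diagram ys"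
  shows "part_at ys i \<le> j" "j < part_at xs i" "r \<le> i" "i \<le> s"
  using assms unfolding border_strip_rows_def diagram_eq_part_at by auto

lemma contents_border_strip_less:
  assumes sx: "sorted_wrt (\<ge>) xs" and rows: "border_strip_rows (part_at xs) (part_at ys) r s"
    and cells: "(i, j) \<in> diagram xs - diagram ys" "(i', j') \<in> diagram xs - diagram ys" and "i < i'"
  shows "int j' - int i' < int j - int i"
proof -
  note cell = border_strip_rows_cell[OF rows]
  have "i < s" using cell(4)[OF cells(2)] \<open>i < i'\<close> by simp
  have "int j' - int i' \<le> beta xs i'" using cell(2)[OF cells(2)] unfolding beta_def by simp
  also have "\<dots> \<le> beta xs (Suc i)" using beta_antimono[OF sx] \<open>i < i'\<close> by simp
  also have "\<dots> = int (part_at ys i) - int i - 1"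
    using rows cell(3)[OF cells(1)] \<open>i < s\<close> unfolding border_strip_rows_def beta_def by force
  also have "\<dots> < int j - int i" using cell(1)[OF cells(1)] by simp
  finally show ?thesis .
qed

lemma contents_border_strip:
  assumes sx: "sorted_wrt (\<ge>) xs" and sy: "sorted_wrt (\<ge>) ys"
    and rows: "border_strip_rows (part_at xs) (part_at ys) r s"
  defines "b \<equiv> beta xs r" and "n \<equiv> int (card (diagram xs - diagram ys))"
  shows "bij_betw (\<lambda>(i, j). int j - int i) (diagram xs - diagram ys) {b - n<..b}"
proof -
  let ?H = "diagram xs - diagram ys" and ?cont = "\<lambda>(i, j). int j - int i"
  note cell = border_strip_rows_cell[OF rows]
  have "int j - int i \<in> {b - n<..b}" if "(i, j) \<in> ?H" for i j
  proof -
    have "int j - int i \<le> beta xs i" using cell(2)[OF that] unfolding beta_def by simp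
    also have "\<dots> \<le> b" unfolding b_def using beta_antimono[OF sx] cell(3)[OF that] by simp
    finally have "int j - int i \<le> b" .
    have "b - n = beta ys s" using beta_border_strip(2)[OF rows] unfolding b_def n_def ..
    also have "\<dots> \<le> beta ys i" using beta_antimono[OF sy] cell(4)[OF that] by simp
    also have "\<dots> < int j - int i" using cell(1)[OF that] unfolding beta_def by simp
    finally show ?thesis using \<open>int j - int i \<le> b\<close> by simp
  qed
  then have into: "?cont ` ?H \<subseteq> {b - n<..b}" by auto
  have "inj_on ?cont ?H"
  proof (rule inj_onI)
    fix p q assume pq: "p \<in> ?H" "q \<in> ?H" "?cont p = ?cont q"
    obtain i j i' j' where p: "p = (i, j)" and q: "q = (i', j')" by fastforce
    have "\<not> i < i'" "\<not> i' < i"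
      using contents_border_strip_less[OF sx rows, of i j i' j']
        contents_border_strip_less[OF sx rows, of i' j' i j] pq
      unfolding p q by auto
    then show "p = q" using pq(3) unfolding p q by simp
  qed
  moreover have "card (?cont ` ?H) = card {b - n<..b}"
    using card_image[OF \<open>inj_on ?cont ?H\<close>] card_border_strip_pos[OF rows] unfolding n_def by simp
  then have "?cont ` ?H = {b - n<..b}" using into by (intro card_subset_eq) auto
  ultimately show ?thesis unfolding bij_betw_def ..
qed

lemma odd_cells_Diff:
  assumes "diagram ys \<subseteq> diagram xs"
  shows "odd_cells xs = odd_cells ys + card {c \<in> diagram xs - diagram ys. odd (fst c + snd c)}"
proof -
  have "{c \<in> diagram xs. odd (fst c + snd c)}
      = {c \<in> diagram ys. odd (fst c + snd c)} \<union> {c \<in> diagram xs - diagram ys. odd (fst c + snd c)}"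
    using assms by auto
  then show ?thesis unfolding odd_cells_def using finite_diagram
    by (simp add: card_Un_disjoint Int_def)
qed

lemma rim_hook_removal_bead_move:
  assumes rh: "rim_hook_removal t xs ys" and t: "t \<ge> 1"
  obtains b where "b \<in> beta_set xs" and "b - int t \<notin> beta_set xs"
    and "beta_set ys = insert (b - int t) (beta_set xs - {b})"
    and "odd_cells xs = odd_cells ys + card {x \<in> {b - int t<..b}. odd x}"
proof -
  obtain r s where rows: "border_strip_rows (part_at xs) (part_at ys) r s"
    using rim_hook_removal_rows[OF assms] .
  have sx: "sorted_wrt (\<ge>) xs" and sy: "sorted_wrt (\<ge>) ys" and sub: "diagram ys \<subseteq> diagram xs"
    and card: "card (diagram xs - diagram ys) = t"
    using rh unfolding rim_hook_removal_def is_partition_def by auto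
  let ?H = "diagram xs - diagram ys" and ?cont = "\<lambda>(i, j). int j - int i" and ?b = "beta xs r"
  have bij: "bij_betw ?cont ?H {?b - int t<..?b}"
    using contents_border_strip[OF sx sy rows] unfolding card .
  have "inj_on ?cont {c \<in> ?H. odd (fst c + snd c)}"
    by (rule inj_on_subset[OF bij_betw_imp_inj_on[OF bij]]) auto
  then have "card {c \<in> ?H. odd (fst c + snd c)} = card (?cont ` {c \<in> ?H. odd (fst c + snd c)})"
    by (rule card_image[symmetric])
  also have "?cont ` {c \<in> ?H. odd (fst c + snd c)} = {x \<in> ?cont ` ?H. odd x}"
    by (force simp: odd_add)
  also have "\<dots> = {x \<in> {?b - int t<..?b}. odd x}"
    unfolding bij_betw_imp_surj_on[OF bij] ..
  finally have "odd_cells xs = odd_cells ys + card {x \<in> {?b - int t<..?b}. odd x}"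
    using odd_cells_Diff[OF sub] by simp
  moreover have "?b \<in> beta_set xs" unfolding beta_set_eq_range by simp
  ultimately show ?thesis
    using that beta_set_border_strip[OF sx sy rows] unfolding card by blast
qed

lemma cell_adj_sym: "sym (cell_adj H)"
  unfolding sym_def cell_adj_def by auto

lemma border_strip_connected:
  assumes rows: "border_strip_rows l g r s"
  shows "cells_connected ({(i, j). j < l i} - {(i, j). j < g i})"
proof -
  let ?H = "{(i, j). j < l i} - {(i, j). j < g i}"
  let ?A = "cell_adj ?H"
  have H: "(i, j) \<in> ?H \<longleftrightarrow> g i \<le> j \<and> j < l i" for i j by auto
  have along_row: "((i, l i - 1), (i, j)) \<in> ?A\<^sup>*" if "(i, j) \<in> ?H" for i j
  proof -
    have "j \<le> l i - 1" using that by auto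
    then show ?thesis
    proof (induction rule: inc_induct)
      case (step n)
      then have "(i, n) \<in> ?H" "(i, Suc n) \<in> ?H" using that by auto
      then have "((i, Suc n), (i, n)) \<in> ?A" unfolding cell_adj_def by simp
      with step.IH show ?case by (rule rtrancl_into_rtrancl)
    qed simp
  qed
  have down_rows: "((r, l r - 1), (i, l i - 1)) \<in> ?A\<^sup>*" if "r \<le> i" "i \<le> s" for i
    using that(1,2)
  proof (induction rule: dec_induct)
    case (step n)
    have "g n + 1 = l (Suc n)" "g n < l n" "g (Suc n) < l (Suc n)"
      using rows step.hyps step.prems unfolding border_strip_rows_def by auto
    then have "(n, l (Suc n) - 1) \<in> ?H" "(Suc n, l (Suc n) - 1) \<in> ?H" by auto
    then have "((n, l n - 1), (n, l (Suc n) - 1)) \<in> ?A\<^sup>*"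
      and "((n, l (Suc n) - 1), (Suc n, l (Suc n) - 1)) \<in> ?A"
      using along_row unfolding cell_adj_def by auto
    then show ?case using step.IH step.prems by (meson rtrancl_into_rtrancl rtrancl_trans Suc_leD)
  qed simp
  have "((r, l r - 1), (i, j)) \<in> ?A\<^sup>*" if "(i, j) \<in> ?H" for i j
  proof -
    have "r \<le> i" "i \<le> s" using that rows unfolding border_strip_rows_def by auto
    then show ?thesis using down_rows along_row[OF that] by (blast intro: rtrancl_trans)
  qed
  then have "(p, (r, l r - 1)) \<in> ?A\<^sup>*" and "((r, l r - 1), q) \<in> ?A\<^sup>*" if "p \<in> ?H" "q \<in> ?H" for p q
    using that sym_rtrancl[OF cell_adj_sym] by (auto dest: symD)
  then show ?thesis
    unfolding cells_connected_def by (blast intro: rtrancl_trans)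
qed

lemma border_strip_no_2x2:
  assumes rows: "border_strip_rows l g r s"
  shows "no_2x2 ({(i, j). j < l i} - {(i, j). j < g i})"
  unfolding no_2x2_def
proof (intro notI, elim exE conjE)
  fix i j assume cells: "(i, j) \<in> {(i, j). j < l i} - {(i, j). j < g i}"
    "(i + 1, j) \<in> {(i, j). j < l i} - {(i, j). j < g i}"
    "(i, j + 1) \<in> {(i, j). j < l i} - {(i, j). j < g i}"
    "(i + 1, j + 1) \<in> {(i, j). j < l i} - {(i, j). j < g i}"
  then have "g i < l i" "g (Suc i) < l (Suc i)" by auto
  then have "r \<le> i" "i < s" using rows unfolding border_strip_rows_def by (auto simp: Suc_le_eq)
  then have "g i + 1 = l (Suc i)" using rows unfolding border_strip_rows_def by auto
  then show False using cells by auto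
qed

lemma rim_hook_removal_of_rows:
  assumes "is_partition xs" "is_partition ys"
    and rows: "border_strip_rows (part_at xs) (part_at ys) r s"
  shows "rim_hook_removal (card (diagram xs - diagram ys)) xs ys"
proof -
  have "diagram ys \<subseteq> diagram xs"
    using rows unfolding border_strip_rows_def diagram_eq_part_at by (auto intro: less_le_trans)
  then show ?thesis
    using assms border_strip_connected[OF rows] border_strip_no_2x2[OF rows]
    unfolding rim_hook_removal_def diagram_eq_part_at by blast
qed

lemma partition_of_antimono:
  assumes anti: "\<And>i. f (Suc i) \<le> f i" and zero: "f n = 0"
  obtains ys where "is_partition ys" and "part_at ys = f"
proof -
  define L where "L = (LEAST i. f i = 0)"
  have "f L = 0" unfolding L_def using zero by (rule LeastI)
  have pos: "0 < f i" if "i < L" for i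
    using not_less_Least[of i "\<lambda>i. f i = 0"] that unfolding L_def by simp
  have am: "f j \<le> f i" if "i \<le> j" for i j using anti that by (rule lift_Suc_antimono_le)
  have "sorted_wrt (\<ge>) (map f [0..<L])" unfolding sorted_wrt_iff_nth_less using am by simp
  moreover have "0 \<notin> set (map f [0..<L])"
  proof
    assume "0 \<in> set (map f [0..<L])"
    then obtain i where "i < L" "f i = 0" by auto
    then show False using pos[of i] by simp
  qed
  moreover have "part_at (map f [0..<L]) = f"
    using am[of L] \<open>f L = 0\<close> by (auto simp: part_at_def fun_eq_iff not_less)
  ultimately show ?thesis using that unfolding is_partition_def by blast
qed

lemma beta_crossing_row:
  assumes sx: "sorted_wrt (\<ge>) xs" and r: "c < beta xs r" and c: "c \<notin> beta_set xs"
  obtains s where "r \<le> s" "s < length xs" "c < beta xs s" "beta xs (Suc s) < c"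
proof -
  define S where "S = {i. c < beta xs i}"
  have "S \<subseteq> {..< nat (beta xs 0 - c)}"
  proof
    fix i assume "i \<in> S"
    then show "i \<in> {..< nat (beta xs 0 - c)}" using beta_le[OF sx, of i] unfolding S_def by simp
  qed
  then have finS: "finite S" by (rule finite_subset) simp
  have rS: "r \<in> S" unfolding S_def using r by simp
  define s where "s = Max S"
  have "r \<le> s" unfolding s_def using finS rS by simp
  have bs: "c < beta xs s" using Max_in[OF finS] rS unfolding s_def S_def by auto
  have "Suc s \<notin> S" unfolding s_def using finS by (metis Max_ge Suc_n_not_le_n)
  moreover have "beta xs (Suc s) \<noteq> c" using c unfolding beta_set_eq_range by (metis rangeI)
  ultimately have bs1: "beta xs (Suc s) < c" unfolding S_def by simp
  have "s < length xs"
  proof (rule ccontr)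
    assume "\<not> s < length xs"
    then have "beta xs s = - int s - 1" "beta xs (Suc s) = - int s - 2"
      unfolding beta_def part_at_def by auto
    then show False using bs bs1 by simp
  qed
  then show ?thesis using that \<open>r \<le> s\<close> bs bs1 by blast
qed

text \<open>Moving the bead b to the free position b - t: rows r to s are the rows whose beads lie
  in (b - t, b]; each of them is shortened to one less than the length of the next row, and row s
  is cut down so that its bead lands on b - t.\<close>
lemma rim_hook_removal_exists:
  assumes px: "is_partition xs" and t: "t \<ge> 1"
    and b: "b \<in> beta_set xs" and free: "b - int t \<notin> beta_set xs"
  obtains ys where "rim_hook_removal t xs ys"
proof -
  have sx: "sorted_wrt (\<ge>) xs" using px unfolding is_partition_def by simp
  define l where "l = part_at xs"
  have lanti: "l j \<le> l i" if "i \<le> j" for i j unfolding l_def using part_at_antimono[OF sx that] .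
  obtain r where br: "b = beta xs r" using b unfolding beta_set_eq_range by auto
  then have "b - int t < beta xs r" using t by simp
  then obtain s where rs: "r \<le> s" and "s < length xs"
    and bs: "b - int t < beta xs s" and bs1: "beta xs (Suc s) < b - int t"
    using beta_crossing_row[OF sx _ free] by blast
  then have lpos: "1 \<le> l i" if "i \<le> s" for i
    using that part_at_pos_iff[OF px, of i] unfolding l_def by simp
  define v where "v = nat (b - int t + int s + 1)"
  have vs: "v < l s" and vs1: "l (Suc s) \<le> v" and v: "int v = b - int t + int s + 1"
    using bs bs1 unfolding v_def beta_def l_def by auto
  define f where "f i = (if r \<le> i \<and> i < s then l (Suc i) - 1 else if i = s then v else l i)" for i
  have rows: "border_strip_rows l f r s"
    unfolding border_strip_rows_def
  proof (intro conjI allI impI)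
    fix i
    show "f i \<le> l i" unfolding f_def using lanti[of i "Suc i"] vs by auto
    show "f i < l i \<longleftrightarrow> r \<le> i \<and> i \<le> s"
      unfolding f_def using lanti[of i "Suc i"] lpos[of "Suc i"] vs rs by auto
    show "f i + 1 = l (Suc i)" if "r \<le> i" "i < s"
      unfolding f_def using that lpos[of "Suc i"] by auto
  qed (rule rs)
  have "f (Suc i) \<le> f i" for i
    unfolding f_def using lanti[of i "Suc i"] lanti[of "Suc i" "Suc (Suc i)"] vs vs1 rs
    by (auto simp: le_diff_conv)
  moreover have "f (length xs) = 0"
    unfolding f_def l_def part_at_def using \<open>s < length xs\<close> by simp
  ultimately obtain ys where py: "is_partition ys" and fy: "part_at ys = f"
    by (rule partition_of_antimono)
  have "int (card (diagram xs - diagram ys)) = int (l r) - int (f s) + int s - int r"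
    using card_border_strip[OF rows] unfolding diagram_eq_part_at l_def fy .
  also have "\<dots> = int t" using v br unfolding f_def beta_def l_def by simp
  finally have "rim_hook_removal t xs ys"
    using rim_hook_removal_of_rows[OF px py] rows unfolding l_def fy by simp
  then show ?thesis by (rule that)
qed

section \<open>Rim hooks on the abacus\<close>

lemma two_card_odd_in_interval:
  "2 * int (card {x \<in> {b - int n<..b}. odd x})
     = int n + (if odd n then if odd b then 1 else -1 else 0)"
proof (induction n)
  case (Suc n)
  have "{b - int (Suc n)<..b} = insert (b - int n) {b - int n<..b}" by auto
  then have "{x \<in> {b - int (Suc n)<..b}. odd x}
      = (if odd (b - int n) then insert (b - int n) else id) {x \<in> {b - int n<..b}. odd x}"
    by auto
  moreover have "finite {x \<in> {b - int n<..b}. odd x}"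
    by (rule finite_subset[of _ "{b - int n<..b}"]) auto
  ultimately have "card {x \<in> {b - int (Suc n)<..b}. odd x}
      = card {x \<in> {b - int n<..b}. odd x} + (if odd (b - int n) then 1 else 0)"
    by (simp only: card_insert_if) simp
  moreover have "odd (b - int n) \<longleftrightarrow> odd b \<noteq> odd n" by simp
  ultimately show ?case using Suc.IH by (cases "odd n"; cases "odd b") simp_all
qed simp

lemma runner_bead_move:
  assumes "c < t"
  shows "runner t (insert (b - int t) (B - {b})) c
    = (if b mod int t = int c then insert (b div int t - 1) (runner t B c - {b div int t})
       else runner t B c)"
proof -
  have hit: "int t * k + int c = b \<longleftrightarrow> b mod int t = int c \<and> k = b div int t" for k b
  proof
    assume "int t * k + int c = b"
    then show "b mod int t = int c \<and> k = b div int t" using assms by auto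
  next
    assume "b mod int t = int c \<and> k = b div int t"
    then show "int t * k + int c = b" by (metis add.commute div_mult_mod_eq mult.commute)
  qed
  have "(b - int t) div int t = b div int t - 1"
    using div_add_self2[of "int t" "b - int t"] assms by simp
  moreover have "(b - int t) mod int t = b mod int t" by (rule minus_mod_self2)
  ultimately show ?thesis unfolding runner_def using hit[of _ b] hit[of _ "b - int t"] by auto
qed

lemma rim_hook_removal_quotients:
  assumes rh: "rim_hook_removal t la mu" and t: "t \<ge> 1"
  obtains c0 b where "c0 < t" and "b mod int t = int c0"
    and "[srank la = srank mu + 2 * int (card {x \<in> {b - int t<..b}. odd x})] (mod 4)"
    and "\<And>c. runner_charge t (beta_set mu) c = runner_charge t (beta_set la) c"
    and "\<And>c. c < t \<Longrightarrow> c \<noteq> c0 \<Longrightarrow> quotient_comp t mu c = quotient_comp t la c"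
    and "psize (quotient_comp t la c0) = Suc (psize (quotient_comp t mu c0))"
    and "[srank (quotient_comp t la c0) = srank (quotient_comp t mu c0)
           + (if odd (b div int t + runner_charge t (beta_set la) c0) then 2 else 0)] (mod 4)"
proof -
  have sl: "sorted_wrt (\<ge>) la" and sm: "sorted_wrt (\<ge>) mu"
    using rh unfolding rim_hook_removal_def is_partition_def by auto
  obtain b where bin: "b \<in> beta_set la" and bnot: "b - int t \<notin> beta_set la"
    and move: "beta_set mu = insert (b - int t) (beta_set la - {b})"
    and odd_cells: "odd_cells la = odd_cells mu + card {x \<in> {b - int t<..b}. odd x}"
    using rim_hook_removal_bead_move[OF rh t] .
  define c0 where "c0 = nat (b mod int t)"
  have c0: "c0 < t" "b mod int t = int c0" using t unfolding c0_def by (simp_all add: nat_less_iff)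
  have "[srank la = 2 * int (odd_cells mu) + 2 * int (card {x \<in> {b - int t<..b}. odd x})] (mod 4)"
    using srank_cong_odd_cells[OF sl] unfolding odd_cells by simp
  moreover have "[2 * int (odd_cells mu) + 2 * int (card {x \<in> {b - int t<..b}. odd x})
      = srank mu + 2 * int (card {x \<in> {b - int t<..b}. odd x})] (mod 4)"
    using srank_cong_odd_cells[OF sm] by (intro cong_add) (simp_all add: cong_sym)
  ultimately have srank:
    "[srank la = srank mu + 2 * int (card {x \<in> {b - int t<..b}. odd x})] (mod 4)"
    by (rule cong_trans)
  have charge: "runner_charge t (beta_set mu) c = runner_charge t (beta_set la) c" for c
    unfolding move runner_charge_move[OF maya_beta_set[OF sl] bin bnot]
    by (simp add: minus_mod_self2)
  have others: "quotient_comp t mu c = quotient_comp t la c" if "c < t" "c \<noteq> c0" for c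
    using that c0 unfolding quotient_comp_eq move runner_bead_move[OF that(1)] by simp
  define R where "R = runner t (beta_set la) c0"
  have R: "maya R" "b div int t \<in> R" "b div int t - 1 \<notin> R"
  proof -
    show "maya R" unfolding R_def using maya_runner[OF maya_beta_set[OF sl] t] .
    have "int t * (b div int t) + int c0 = b" using c0(2) by (metis div_mult_mod_eq mult.commute)
    then show "b div int t \<in> R" "b div int t - 1 \<notin> R"
      using bin bnot unfolding R_def runner_def by (simp_all add: algebra_simps)
  qed
  have "quotient_comp t mu c0 = maya_partition (insert (b div int t - 1) (R - {b div int t}))"
    unfolding quotient_comp_eq move runner_bead_move[OF c0(1)] R_def using c0(2) by simp
  moreover have "quotient_comp t la c0 = maya_partition R" unfolding quotient_comp_eq R_def ..
  moreover have "charge R = runner_charge t (beta_set la) c0"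
    unfolding R_def by (rule charge_runner[OF c0(1)])
  ultimately show ?thesis
    using that c0 srank charge others maya_partition_bead_move[OF R] by simp
qed

lemma quotient_comp_tcore:
  assumes core: "is_tcore t ka" and c: "c < t"
  shows "quotient_comp t ka c = []"
proof -
  have pk: "is_partition ka" using core unfolding is_tcore_def by simp
  have down: "b - int t \<in> beta_set ka" if bead: "b \<in> beta_set ka" for b
  proof (rule ccontr)
    assume "b - int t \<notin> beta_set ka"
    moreover have "t \<ge> 1" using c by simp
    ultimately obtain mu where "rim_hook_removal t ka mu"
      using rim_hook_removal_exists[OF pk _ bead] by blast
    then show False using core unfolding is_tcore_def by blast
  qed
  define R where "R = runner t (beta_set ka) c"
  have step: "k - 1 \<in> R" if "k \<in> R" for k
  proof -
    have "int t * k + int c - int t \<in> beta_set ka"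
      using down that unfolding R_def runner_def by simp
    moreover have "int t * k + int c - int t = int t * (k - 1) + int c" by (simp add: algebra_simps)
    ultimately show ?thesis unfolding R_def runner_def by simp
  qed
  have below: "k - int n \<in> R" if "k \<in> R" for k n
  proof (induction n)
    case (Suc n)
    have "k - int (Suc n) = k - int n - 1" by simp
    then show ?case using step[OF Suc] by (simp only:)
  qed (use that in simp)
  have "covered_gaps R = {}"
  proof (rule ccontr)
    assume "covered_gaps R \<noteq> {}"
    then obtain g where g: "g \<notin> R" "count_above R g > 0" unfolding covered_gaps_def by auto
    then obtain s where "s \<in> R" "g < s" unfolding count_above_def by (auto simp: card_gt_0_iff)
    then show False using below[of s "nat (s - g)"] g(1) by simp
  qed
  then show ?thesis unfolding quotient_comp_eq R_def[symmetric] maya_partition_def by simp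
qed

lemma two_card_odd_in_interval_cong:
  assumes "int t mod 4 = int (1 + 2 * a)"
  shows "[2 * int (card {x \<in> {b - int t<..b}. odd x})
          = 2 * (n + b mod int t + int a) + (if odd (b div int t + n) then 2 else 0)] (mod 4)"
proof -
  define k0 where "k0 = b div int t"
  define c0 where "c0 = b mod int t"
  have "odd t" using assms by presburger
  have b: "b = int t * k0 + c0" unfolding k0_def c0_def by simp
  then have "odd b \<longleftrightarrow> odd (k0 + c0)" using \<open>odd t\<close> by simp
  moreover have "int t = 4 * (int t div 4) + 1 + 2 * int a"
    using assms div_mult_mod_eq[of "int t" 4] by simp
  ultimately show ?thesis
    unfolding two_card_odd_in_interval cong_iff_dvd_diff k0_def[symmetric] c0_def[symmetric]
    using \<open>odd t\<close> by (simp split: if_splits) presburger+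
qed

lemma sum_lessThan_modify_at:
  fixes F G :: "nat \<Rightarrow> 'a::ab_group_add"
  assumes "c0 < t" "\<And>i. i < t \<Longrightarrow> i \<noteq> c0 \<Longrightarrow> F i = G i"
  shows "(\<Sum>i<t. F i) = (\<Sum>i<t. G i) + (F c0 - G c0)"
proof -
  have "(\<Sum>i\<in>{..<t} - {c0}. F i) = (\<Sum>i\<in>{..<t} - {c0}. G i)"
    using assms(2) by (intro sum.cong) auto
  moreover have "(\<Sum>i<t. H i) = H c0 + (\<Sum>i\<in>{..<t} - {c0}. H i)" for H :: "nat \<Rightarrow> 'a"
    using assms(1) by (simp add: sum.remove)
  ultimately show ?thesis by (simp add: algebra_simps)
qed

lemma runner_charge_rtranclp_rim_hook_removal:
  assumes "(rim_hook_removal t)\<^sup>*\<^sup>* la ka" "t \<ge> 1"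
  shows "runner_charge t (beta_set la) c = runner_charge t (beta_set ka) c"
  using assms(1)
proof (induction rule: converse_rtranclp_induct)
  case (step la mu)
  obtain c0 b where "c0 < t" and "b mod int t = int c0"
    and "[srank la = srank mu + 2 * int (card {x \<in> {b - int t<..b}. odd x})] (mod 4)"
    and charge: "\<And>c. runner_charge t (beta_set mu) c = runner_charge t (beta_set la) c"
    and "\<And>c. c < t \<Longrightarrow> c \<noteq> c0 \<Longrightarrow> quotient_comp t mu c = quotient_comp t la c"
    and "psize (quotient_comp t la c0) = Suc (psize (quotient_comp t mu c0))"
    and "[srank (quotient_comp t la c0) = srank (quotient_comp t mu c0)
           + (if odd (b div int t + runner_charge t (beta_set la) c0) then 2 else 0)] (mod 4)"
    using rim_hook_removal_quotients[OF step.hyps(1) assms(2)] by blast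
  then show ?case using step.IH charge by simp
qed simp

lemma cong_rtranclp_invariant:
  assumes "R\<^sup>*\<^sup>* x y" and "\<And>u v. R u v \<Longrightarrow> R\<^sup>*\<^sup>* v y \<Longrightarrow> [f u = f v] (mod m)"
  shows "[f x = f y] (mod m)"
  using assms(1) by (induction rule: converse_rtranclp_induct) (auto intro: cong_trans assms(2))

lemma rim_hook_removal_cong_even:
  assumes rh: "rim_hook_removal t la mu" and t: "t \<ge> 1" and t_mod: "int t mod 4 = int (2 * a)"
  defines "Q pi \<equiv> \<Sum>i<t. int (psize (quotient_comp t pi i))"
  shows "[srank la - 2 * int a * Q la = srank mu - 2 * int a * Q mu] (mod 4)"
proof -
  obtain c0 b where c0: "c0 < t" and "b mod int t = int c0"
    and srank: "[srank la = srank mu + 2 * int (card {x \<in> {b - int t<..b}. odd x})] (mod 4)"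
    and "\<And>c. runner_charge t (beta_set mu) c = runner_charge t (beta_set la) c"
    and others: "\<And>c. c < t \<Longrightarrow> c \<noteq> c0 \<Longrightarrow> quotient_comp t mu c = quotient_comp t la c"
    and psize: "psize (quotient_comp t la c0) = Suc (psize (quotient_comp t mu c0))"
    and "[srank (quotient_comp t la c0) = srank (quotient_comp t mu c0)
           + (if odd (b div int t + runner_charge t (beta_set la) c0) then 2 else 0)] (mod 4)"
    using rim_hook_removal_quotients[OF rh t] by blast
  have "even t" using t_mod by presburger
  then have "2 * int (card {x \<in> {b - int t<..b}. odd x}) = int t"
    using two_card_odd_in_interval[of b t] by simp
  then have "4 dvd srank la - (srank mu + int t)" using srank unfolding cong_iff_dvd_diff by simp
  moreover have "4 dvd int t - 2 * int a" using t_mod by presburger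
  ultimately have "4 dvd (srank la - (srank mu + int t)) + (int t - 2 * int a)" by (rule dvd_add)
  moreover have Q: "Q la = Q mu + 1"
  proof -
    have "Q la = Q mu + (int (psize (quotient_comp t la c0)) - int (psize (quotient_comp t mu c0)))"
      unfolding Q_def using others by (intro sum_lessThan_modify_at[OF c0]) simp
    then show ?thesis using psize by simp
  qed
  ultimately show ?thesis unfolding cong_iff_dvd_diff Q by (simp add: algebra_simps)
qed

lemma rim_hook_removal_cong_odd:
  assumes rh: "rim_hook_removal t la mu" and t: "t \<ge> 1" and t_mod: "int t mod 4 = int (1 + 2 * a)"
    and n: "\<And>i. i < t \<Longrightarrow> n i = runner_charge t (beta_set la) i"
  defines "X pi \<equiv> \<Sum>i<t. (n i + int i + int a) * int (psize (quotient_comp t pi i))"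
    and "Y pi \<equiv> \<Sum>i<t. srank (quotient_comp t pi i)"
  shows "[srank la - 2 * X la - Y la = srank mu - 2 * X mu - Y mu] (mod 4)"
proof -
  obtain c0 b where c0: "c0 < t" and b: "b mod int t = int c0"
    and srank: "[srank la = srank mu + 2 * int (card {x \<in> {b - int t<..b}. odd x})] (mod 4)"
    and "\<And>c. runner_charge t (beta_set mu) c = runner_charge t (beta_set la) c"
    and others: "\<And>c. c < t \<Longrightarrow> c \<noteq> c0 \<Longrightarrow> quotient_comp t mu c = quotient_comp t la c"
    and psize: "psize (quotient_comp t la c0) = Suc (psize (quotient_comp t mu c0))"
    and srank_c0: "[srank (quotient_comp t la c0) = srank (quotient_comp t mu c0)
           + (if odd (b div int t + runner_charge t (beta_set la) c0) then 2 else 0)] (mod 4)"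
    using rim_hook_removal_quotients[OF rh t] by blast
  define d :: int where "d = (if odd (b div int t + n c0) then 2 else 0)"
  have dvd4: "4 dvd srank la - (srank mu + 2 * int (card {x \<in> {b - int t<..b}. odd x}))"
    "4 dvd 2 * int (card {x \<in> {b - int t<..b}. odd x}) - (2 * (n c0 + int c0 + int a) + d)"
    "4 dvd srank (quotient_comp t la c0) - (srank (quotient_comp t mu c0) + d)"
    using srank two_card_odd_in_interval_cong[OF t_mod, of b "n c0"] srank_c0 n[OF c0]
    unfolding d_def b cong_iff_dvd_diff by simp_all
  have "4 dvd (srank la - (srank mu + 2 * int (card {x \<in> {b - int t<..b}. odd x})))
      + (2 * int (card {x \<in> {b - int t<..b}. odd x}) - (2 * (n c0 + int c0 + int a) + d))
      - (srank (quotient_comp t la c0) - (srank (quotient_comp t mu c0) + d))"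
    by (rule dvd_diff[OF dvd_add[OF dvd4(1,2)] dvd4(3)])
  moreover have X: "X la = X mu + (n c0 + int c0 + int a)"
  proof -
    have "X la = X mu + ((n c0 + int c0 + int a) * int (psize (quotient_comp t la c0))
        - (n c0 + int c0 + int a) * int (psize (quotient_comp t mu c0)))"
      unfolding X_def using others by (intro sum_lessThan_modify_at[OF c0]) simp
    then show ?thesis using psize by (simp add: algebra_simps)
  qed
  moreover have Y: "Y la = Y mu + (srank (quotient_comp t la c0) - srank (quotient_comp t mu c0))"
    unfolding Y_def using others by (intro sum_lessThan_modify_at[OF c0]) simp
  ultimately show ?thesis unfolding cong_iff_dvd_diff X Y by (simp add: algebra_simps)
qed

lemma srank_cong_tcore_even:
  assumes chain: "(rim_hook_removal t)\<^sup>*\<^sup>* pi kappa" and core: "is_tcore t kappa"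
    and t: "t \<ge> 1" and t_mod: "int t mod 4 = int (2 * a)"
  shows "[srank pi = srank kappa + 2 * int a * (\<Sum>i<t. int (psize (quotient_comp t pi i)))] (mod 4)"
proof -
  have "[srank pi - 2 * int a * (\<Sum>i<t. int (psize (quotient_comp t pi i)))
      = srank kappa - 2 * int a * (\<Sum>i<t. int (psize (quotient_comp t kappa i)))] (mod 4)"
    using chain by (rule cong_rtranclp_invariant) (rule rim_hook_removal_cong_even[OF _ t t_mod])
  moreover have "(\<Sum>i<t. int (psize (quotient_comp t kappa i))) = 0"
    using quotient_comp_tcore[OF core] by (simp add: psize_def)
  ultimately show ?thesis unfolding cong_iff_dvd_diff by (simp add: algebra_simps)
qed

lemma srank_cong_tcore_odd:
  assumes chain: "(rim_hook_removal t)\<^sup>*\<^sup>* pi kappa" and core: "is_tcore t kappa"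
    and t: "t \<ge> 1" and t_mod: "int t mod 4 = int (1 + 2 * a)"
  shows "[srank pi = srank kappa
           + 2 * (\<Sum>i<t. (nvec t kappa i + int i + int a) * int (psize (quotient_comp t pi i)))
           + (\<Sum>i<t. srank (quotient_comp t pi i))] (mod 4)"
proof -
  define X
    where "X la = (\<Sum>i<t. (nvec t kappa i + int i + int a) * int (psize (quotient_comp t la i)))"
    for la
  define Y where "Y la = (\<Sum>i<t. srank (quotient_comp t la i))" for la
  have "sorted_wrt (\<ge>) kappa" using core unfolding is_tcore_def is_partition_def by simp
  then have charge: "nvec t kappa i = runner_charge t (beta_set la) i"
    if "(rim_hook_removal t)\<^sup>*\<^sup>* la kappa" "i < t" for la i
    using that nvec_eq_runner_charge runner_charge_rtranclp_rim_hook_removal[OF _ t] by simp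
  have "[srank pi - 2 * X pi - Y pi = srank kappa - 2 * X kappa - Y kappa] (mod 4)"
    using chain
  proof (rule cong_rtranclp_invariant)
    fix la mu assume step: "rim_hook_removal t la mu" "(rim_hook_removal t)\<^sup>*\<^sup>* mu kappa"
    then have "(rim_hook_removal t)\<^sup>*\<^sup>* la kappa" by (rule converse_rtranclp_into_rtranclp)
    then show "[srank la - 2 * X la - Y la = srank mu - 2 * X mu - Y mu] (mod 4)"
      unfolding X_def Y_def using charge by (intro rim_hook_removal_cong_odd[OF step(1) t t_mod])
  qed
  moreover have "X kappa = 0" and "Y kappa = 0"
    unfolding X_def Y_def using quotient_comp_tcore[OF core] by (simp_all add: psize_def srank_Nil)
  ultimately show ?thesis
    unfolding cong_iff_dvd_diff X_def[symmetric] Y_def[symmetric] by (simp add: algebra_simps)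
qed

theorem mainTheorem6:
  fixes t a :: nat and pi kappa :: "nat list"
  assumes "t \<ge> 2" and "a \<in> {0, 1}"
    and "is_partition pi"
    and "tcore_of t pi kappa"
  shows "(int t mod 4 = int (2 * a) \<longrightarrow>
           srank pi mod 4 =
             (srank kappa + 2 * int a * (\<Sum>i<t. int (psize (quotient_comp t pi i)))) mod 4)
       \<and> (int t mod 4 = int (1 + 2 * a) \<longrightarrow>
           srank pi mod 4 =
             (srank kappa
              + 2 * (\<Sum>i<t. (nvec t kappa i + int i + int a) * int (psize (quotient_comp t pi i)))
              + (\<Sum>i<t. srank (quotient_comp t pi i))) mod 4)"
proof -
  \<comment> \<open>Either congruence on t already forces a \<le> 1.\<close>
  have t: "t \<ge> 1" using assms(1) by simp
  have chain: "(rim_hook_removal t)\<^sup>*\<^sup>* pi kappa" and core: "is_tcore t kappa"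
    using assms(4) unfolding tcore_of_def by auto
  show ?thesis
    using srank_cong_tcore_even[OF chain core t, of a] srank_cong_tcore_odd[OF chain core t, of a]
    unfolding cong_def by blast
qed

end
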